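(* Let $m\in\mathbb{Z}_{>0}$, let $X$ be a finite set with $|X|=2m$, $S=\{0,1\}^X$ and $B=\{-1,1\}^X$. Then for every $\varepsilon,\delta\ge0$, $\#\mathsf{CorM}(S,B,\varepsilon,\delta)=0$. However, for the uniform distribution $\mu_X$ over $X$ and every $\varepsilon,\delta\in(0,1/2)$, $\#\mathsf{DCorM}^{\mu_X}(B,S,\varepsilon,\delta)\ge(1/2-\varepsilon)m$.
   Context: Generalized product: $u_1\diamondsuit u_2=u_1u_2$ if $u_2\in[-1,1]$, $-|u_1|$ if $u_2=*$ (here all hypotheses are total). Learners take $n$ points of $X\times[-1,1]$ and output $f:X\to\{-1,1\}$ (possibly randomized). $\mathsf{CorM}_n(S,B,\varepsilon,\delta)$: for every distribution $\mu$ on $X\times[-1,1]$ for which some $s\in S$ has $\Pr_{x\sim\mu|_X}[s(x)\ne*]=1$ and $\mathbb{E}_\mu[y|x]=s(x)$, with probability $\ge1-\delta$ over $n$ i.i.d. samples, $\mathbb{E}_\mu[yf(x)]\ge\sup_{b\in B}\mathbb{E}_\mu[y\diamondsuit b(x)]-\varepsilon$. $\mathsf{DCorM}^{\mu_X}_n(S,B,\varepsilon,\delta)$: the same guarantee but only required for distributions $\mu$ with $\mu|_X=\mu_X$ and $\Pr_\mu[s(x)=y]=1$ for some $s\in S$. $\#\mathsf{CorM}$, $\#\mathsf{DCorM}^{\mu_X}$ are the least $n$ for which such a learner exists. *)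

theory Defs
  imports "HOL-Probability.Probability"
begin

text \<open>Partial hypotheses: a hypothesis is a map X \<Rightarrow> real option, where None stands for the
  undefined value *.  The generalized product.\<close>
definition gprod :: "real \<Rightarrow> real option \<Rightarrow> real" where
  "gprod u1 u2 = (case u2 of Some v \<Rightarrow> u1 * v | None \<Rightarrow> - \<bar>u1\<bar>)"

definition valid_dist :: "('x \<times> real) measure \<Rightarrow> bool" where
  "valid_dist \<mu> \<longleftrightarrow> prob_space \<mu> \<and> sets \<mu> = sets (count_space UNIV \<Otimes>\<^sub>M borel)
     \<and> (AE z in \<mu>. snd z \<in> {-1..1})"

text \<open>s is defined almost surely and E[y | x] = s(x) (X is finite, so conditional
  expectation is given by E[y 1{x}] = s(x) Pr[x]).\<close>
definition cond_realizes :: "('x \<Rightarrow> real option) \<Rightarrow> ('x \<times> real) measure \<Rightarrow> bool" where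
  "cond_realizes s \<mu> \<longleftrightarrow> (AE z in \<mu>. s (fst z) \<noteq> None) \<and>
     (\<forall>x v. s x = Some v \<longrightarrow>
        (\<integral>z. snd z * indicator ({x} \<times> UNIV) z \<partial>\<mu>) = v * measure \<mu> ({x} \<times> UNIV))"

definition det_realizes :: "('x \<Rightarrow> real option) \<Rightarrow> ('x \<times> real) measure \<Rightarrow> bool" where
  "det_realizes s \<mu> \<longleftrightarrow> (AE z in \<mu>. s (fst z) = Some (snd z))"

text \<open>A randomized learner with n samples: a map from the sample (indexed by {..<n})
  to a distribution over output functions X \<Rightarrow> {-1,1}.\<close>
definition pm_valued :: "(('x \<Rightarrow> real) pmf) \<Rightarrow> bool" where
  "pm_valued p \<longleftrightarrow> set_pmf p \<subseteq> {f. \<forall>x. f x \<in> {-1, 1}}"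

definition good_output :: "('x \<times> real) measure \<Rightarrow> ('x \<Rightarrow> real option) set \<Rightarrow> real
    \<Rightarrow> ('x \<Rightarrow> real) \<Rightarrow> bool" where
  "good_output \<mu> B \<epsilon> f \<longleftrightarrow>
     (\<integral>z. snd z * f (fst z) \<partial>\<mu>) \<ge> (SUP b\<in>B. \<integral>z. gprod (snd z) (b (fst z)) \<partial>\<mu>) - \<epsilon>"

text \<open>Probability (jointly over the n i.i.d. samples and the learner's randomness) that the
  learner succeeds; the lower (nonnegative) integral is used.\<close>
definition success_prob :: "nat \<Rightarrow> ((nat \<Rightarrow> 'x \<times> real) \<Rightarrow> ('x \<Rightarrow> real) pmf)
    \<Rightarrow> ('x \<times> real) measure \<Rightarrow> ('x \<Rightarrow> real option) set \<Rightarrow> real \<Rightarrow> ennreal" where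
  "success_prob n L \<mu> B \<epsilon> =
     (\<integral>\<^sup>+ \<omega>. ennreal (measure_pmf.prob (L \<omega>) {f. good_output \<mu> B \<epsilon> f}) \<partial>(\<Pi>\<^sub>M i\<in>{..<n}. \<mu>))"

definition CorM :: "nat \<Rightarrow> ('x \<Rightarrow> real option) set \<Rightarrow> ('x \<Rightarrow> real option) set
    \<Rightarrow> real \<Rightarrow> real \<Rightarrow> bool" where
  "CorM n S B \<epsilon> \<delta> \<longleftrightarrow> (\<exists>L. (\<forall>\<omega>. pm_valued (L \<omega>)) \<and>
     (\<forall>\<mu>. valid_dist \<mu> \<and> (\<exists>s\<in>S. cond_realizes s \<mu>) \<longrightarrow>
        success_prob n L \<mu> B \<epsilon> \<ge> ennreal (1 - \<delta>)))"

definition DCorM :: "'x measure \<Rightarrow> nat \<Rightarrow> ('x \<Rightarrow> real option) set \<Rightarrow> ('x \<Rightarrow> real option) set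
    \<Rightarrow> real \<Rightarrow> real \<Rightarrow> bool" where
  "DCorM \<mu>X n S B \<epsilon> \<delta> \<longleftrightarrow> (\<exists>L. (\<forall>\<omega>. pm_valued (L \<omega>)) \<and>
     (\<forall>\<mu>. valid_dist \<mu> \<and> distr \<mu> (count_space UNIV) fst = \<mu>X \<and> (\<exists>s\<in>S. det_realizes s \<mu>) \<longrightarrow>
        success_prob n L \<mu> B \<epsilon> \<ge> ennreal (1 - \<delta>)))"

definition numCorM :: "('x \<Rightarrow> real option) set \<Rightarrow> ('x \<Rightarrow> real option) set \<Rightarrow> real \<Rightarrow> real \<Rightarrow> nat" where
  "numCorM S B \<epsilon> \<delta> = (LEAST n. CorM n S B \<epsilon> \<delta>)"

end

theory Submission
  imports Defs
begin

(* When S consists of nonnegative hypotheses, E[y b(x)] = sum_x b(x) s(x) Pr[x] never exceeds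
   E[y] = sum_x s(x) Pr[x] for b <= 1, so the constant learner 1 succeeds without samples.

   For the lower bound, take the distributions with uniform x and label y = b(x) for a sign
   vector b.  The best {0,1}-valued hypothesis achieves #{b = 1}/N, where N = |X|, and an
   output f is epsilon-good for b iff the losses [b(x) = 1] - b(x) f(x) sum to at most
   epsilon N.  A sample of size n reveals b only on a set R with |R| <= n; flipping b outside R
   yields a labelling with the same sample, and no f is good for both unless
   N (1 - 2 epsilon) <= 3 |R|.  Pairing b with its flip, the success probabilities over all b
   average to at most 1/2 < 1 - delta. *)

section \<open>Learning nonnegative hypotheses without samples\<close>

lemma integral_snd_mult_cond_realizes:
  fixes \<mu> :: "('x::finite \<times> real) measure"
  assumes valid: "valid_dist \<mu>" and realizes: "cond_realizes (\<lambda>x. Some (s x)) \<mu>"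
  shows "(\<integral>z. snd z * g (fst z) \<partial>\<mu>) = (\<Sum>x\<in>UNIV. g x * s x * measure \<mu> ({x} \<times> UNIV))"
proof -
  have sets: "sets \<mu> = sets (count_space UNIV \<Otimes>\<^sub>M borel)"
    and bounded: "AE z in \<mu>. snd z \<in> {-1..1}"
    using valid by (simp_all add: valid_dist_def)
  interpret prob_space \<mu> using valid by (simp add: valid_dist_def)
  have integrable: "integrable \<mu> (\<lambda>z. snd z * indicator ({x} \<times> UNIV) z)" for x
  proof (rule integrable_const_bound[where B=1])
    show "AE z in \<mu>. norm (snd z * indicator ({x} \<times> UNIV) z) \<le> 1"
      using bounded by eventually_elim (auto simp: indicator_def)
    show "(\<lambda>z. snd z * indicator ({x} \<times> UNIV) z) \<in> borel_measurable \<mu>"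
      unfolding measurable_cong_sets[OF sets refl] by measurable
  qed
  have pointwise: "snd z * g (fst z) = (\<Sum>x\<in>UNIV. g x * (snd z * indicator ({x} \<times> UNIV) z))" for z
    by (cases z) (simp add: indicator_def of_bool_def if_distrib[of "(*) _"] cong: if_cong)
  have "(\<integral>z. snd z * g (fst z) \<partial>\<mu>) = (\<integral>z. (\<Sum>x\<in>UNIV. g x * (snd z * indicator ({x} \<times> UNIV) z)) \<partial>\<mu>)"
    by (simp only: pointwise)
  also have "\<dots> = (\<Sum>x\<in>UNIV. g x * (\<integral>z. snd z * indicator ({x} \<times> UNIV) z \<partial>\<mu>))"
    using integrable by simp
  also have "\<dots> = (\<Sum>x\<in>UNIV. g x * s x * measure \<mu> ({x} \<times> UNIV))"
    using realizes by (simp add: cond_realizes_def mult.assoc)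
  finally show ?thesis .
qed

lemma good_output_const_one:
  fixes \<mu> :: "('x::finite \<times> real) measure"
  assumes valid: "valid_dist \<mu>" and realizes: "cond_realizes (\<lambda>x. Some (s x)) \<mu>"
    and s_nonneg: "\<And>x. s x \<ge> 0"
    and B: "\<And>b x. b \<in> B \<Longrightarrow> \<exists>v \<le> 1. b x = Some v" and "B \<noteq> {}" and "\<epsilon> \<ge> 0"
  shows "good_output \<mu> B \<epsilon> (\<lambda>_. 1)"
proof -
  have "(\<integral>z. gprod (snd z) (b (fst z)) \<partial>\<mu>) \<le> (\<integral>z. snd z * 1 \<partial>\<mu>)" if "b \<in> B" for b
  proof -
    define v where "v x = the (b x)" for x
    have v: "b x = Some (v x)" "v x \<le> 1" for x
      using B[OF that, of x] by (auto simp: v_def)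
    have "(\<integral>z. gprod (snd z) (b (fst z)) \<partial>\<mu>) = (\<integral>z. snd z * v (fst z) \<partial>\<mu>)"
      by (simp add: gprod_def v(1))
    also have "\<dots> = (\<Sum>x\<in>UNIV. v x * s x * measure \<mu> ({x} \<times> UNIV))"
      by (rule integral_snd_mult_cond_realizes[OF valid realizes])
    also have "\<dots> \<le> (\<Sum>x\<in>UNIV. 1 * s x * measure \<mu> ({x} \<times> UNIV))"
      using v(2) s_nonneg by (intro sum_mono mult_right_mono) auto
    also have "\<dots> = (\<integral>z. snd z * 1 \<partial>\<mu>)"
      by (rule integral_snd_mult_cond_realizes[OF valid realizes, symmetric])
    finally show ?thesis .
  qed
  then have "(SUP b\<in>B. \<integral>z. gprod (snd z) (b (fst z)) \<partial>\<mu>) \<le> (\<integral>z. snd z * 1 \<partial>\<mu>)"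
    by (rule cSUP_least[OF \<open>B \<noteq> {}\<close>])
  then show ?thesis
    unfolding good_output_def using \<open>\<epsilon> \<ge> 0\<close> by simp
qed

lemma CorM_0_if_nonneg_and_le_one:
  fixes S B :: "('x::finite \<Rightarrow> real option) set" and \<delta> :: real
  assumes S: "\<And>s x. s \<in> S \<Longrightarrow> \<exists>v \<ge> 0. s x = Some v"
    and B: "\<And>b x. b \<in> B \<Longrightarrow> \<exists>v \<le> 1. b x = Some v" and "B \<noteq> {}"
    and "\<epsilon> \<ge> 0" and "\<delta> \<ge> 0"
  shows "CorM 0 S B \<epsilon> \<delta>"
  unfolding CorM_def
proof (intro exI[of _ "\<lambda>_. return_pmf (\<lambda>_. 1)"] conjI allI impI)
  show "pm_valued (return_pmf (\<lambda>_. 1))" by (simp add: pm_valued_def)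
  fix \<mu> :: "('x \<times> real) measure"
  assume "valid_dist \<mu> \<and> (\<exists>s\<in>S. cond_realizes s \<mu>)"
  then obtain s where "valid_dist \<mu>" "s \<in> S" "cond_realizes s \<mu>" by blast
  define v where "v x = the (s x)" for x
  have v: "s x = Some (v x)" "v x \<ge> 0" for x
    using S[OF \<open>s \<in> S\<close>, of x] by (auto simp: v_def)
  then have "s = (\<lambda>x. Some (v x))"
    by (simp add: fun_eq_iff)
  with \<open>cond_realizes s \<mu>\<close> have "cond_realizes (\<lambda>x. Some (v x)) \<mu>"
    by simp
  then have "good_output \<mu> B \<epsilon> (\<lambda>_. 1)"
    using good_output_const_one[OF \<open>valid_dist \<mu>\<close>] v(2) B assms(3,4) by blast
  then show "ennreal (1 - \<delta>) \<le> success_prob 0 (\<lambda>_. return_pmf (\<lambda>_. 1)) \<mu> B \<epsilon>"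
    unfolding success_prob_def using \<open>\<delta> \<ge> 0\<close> by (simp add: PiM_empty)
qed

section \<open>Uniform points with deterministic labels\<close>

definition labelled_uniform :: "('x::finite \<Rightarrow> real) \<Rightarrow> ('x \<times> real) measure" where
  "labelled_uniform b =
     distr (measure_pmf (pmf_of_set UNIV)) (count_space UNIV \<Otimes>\<^sub>M borel) (\<lambda>x. (x, b x))"

lemma measurable_graph_uniform:
  "(\<lambda>x. (x, b x)) \<in> measurable (measure_pmf (pmf_of_set (UNIV :: 'x::finite set))) (count_space UNIV \<Otimes>\<^sub>M borel)"
  by (simp add: measurable_cong_sets[OF sets_measure_pmf_count_space refl] space_pair_measure)

lemma prob_space_labelled_uniform: "prob_space (labelled_uniform b)"
  unfolding labelled_uniform_def by (rule measure_pmf.prob_space_distr[OF measurable_graph_uniform])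

lemma sets_labelled_uniform [simp]:
  "sets (labelled_uniform b) = sets (count_space UNIV \<Otimes>\<^sub>M borel)"
  by (simp add: labelled_uniform_def)

lemma AE_labelled_uniform:
  assumes "Measurable.pred (count_space UNIV \<Otimes>\<^sub>M borel) P" and "\<And>x. P (x, b x)"
  shows "AE z in labelled_uniform b. P z"
  unfolding labelled_uniform_def using assms
  by (subst AE_distr_iff[OF measurable_graph_uniform]) (auto intro: AE_I2)

lemma integral_snd_mult_labelled_uniform:
  fixes b g :: "'x::finite \<Rightarrow> real"
  shows "(\<integral>z. snd z * g (fst z) \<partial>labelled_uniform b) = (\<Sum>x\<in>UNIV. b x * g x) / CARD('x)"
proof -
  have "(\<lambda>z. snd z * g (fst z)) \<in> borel_measurable (count_space (UNIV :: 'x set) \<Otimes>\<^sub>M borel)"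
    by measurable
  then show ?thesis
    unfolding labelled_uniform_def
    by (simp add: integral_distr[OF measurable_graph_uniform] integral_pmf_of_set)
qed

lemma valid_dist_labelled_uniform:
  assumes "\<And>x. b x \<in> {-1..1}"
  shows "valid_dist (labelled_uniform b)"
  unfolding valid_dist_def using prob_space_labelled_uniform assms
  by (auto intro!: AE_labelled_uniform)

lemma distr_fst_labelled_uniform:
  "distr (labelled_uniform b) (count_space UNIV) fst = measure_pmf (pmf_of_set UNIV)"
  unfolding labelled_uniform_def
  by (subst distr_distr) (auto simp: comp_def sets_measure_pmf_count_space space_pair_measure intro!: distr_id2)

lemma AE_labelled_uniform_graph:
  fixes b :: "'x::finite \<Rightarrow> real"
  shows "AE z in labelled_uniform b. snd z = b (fst z)"
proof (rule AE_labelled_uniform)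
  show "Measurable.pred (count_space UNIV \<Otimes>\<^sub>M borel) (\<lambda>z::'x \<times> real. snd z = b (fst z))"
    by measurable
qed simp

lemma det_realizes_labelled_uniform: "det_realizes (\<lambda>x. Some (b x)) (labelled_uniform b)"
  unfolding det_realizes_def using AE_labelled_uniform_graph by (rule AE_mp) auto

lemma emeasure_labelled_uniform_singleton:
  fixes b :: "'x::finite \<Rightarrow> real"
  shows "emeasure (labelled_uniform b) {(x, b x)} = ennreal (1 / CARD('x))"
proof -
  have "{(x, b x)} \<in> sets (count_space UNIV \<Otimes>\<^sub>M (borel :: real measure))"
    using pair_measureI[of "{x}" _ "{b x}"] by simp
  then have "emeasure (labelled_uniform b) {(x, b x)} = emeasure (measure_pmf (pmf_of_set UNIV)) {x}"
    unfolding labelled_uniform_def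
    by (subst emeasure_distr[OF measurable_graph_uniform]) (auto intro!: arg_cong2[where f=emeasure])
  also have "\<dots> = ennreal (1 / CARD('x))"
    by (simp add: emeasure_pmf_of_set ennreal_of_nat_eq_real_of_nat divide_ennreal)
  finally show ?thesis .
qed

lemma nn_integral_finite_support:
  assumes "finite A" and "AE x in M. x \<in> A" and "\<And>a. a \<in> A \<Longrightarrow> {a} \<in> sets M"
  shows "(\<integral>\<^sup>+ x. f x \<partial>M) = (\<Sum>a\<in>A. f a * emeasure M {a})"
proof -
  have "(\<integral>\<^sup>+ x. f x \<partial>M) = (\<integral>\<^sup>+ x. f x * indicator A x \<partial>M)"
    using assms(2) by (intro nn_integral_cong_AE) (auto simp: indicator_def)
  also have "\<dots> = (\<Sum>a\<in>A. f a * emeasure M {a})"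
    using assms(1,3) by (rule nn_integral_indicator_finite)
  finally show ?thesis .
qed

definition labelled_sample :: "('x \<Rightarrow> real) \<Rightarrow> nat \<Rightarrow> (nat \<Rightarrow> 'x) \<Rightarrow> nat \<Rightarrow> 'x \<times> real" where
  "labelled_sample b n xs = (\<lambda>i\<in>{..<n}. (xs i, b (xs i)))"

lemma inj_on_labelled_sample: "inj_on (labelled_sample b n) (Pi\<^sub>E {..<n} (\<lambda>_. UNIV))"
proof (rule inj_onI)
  fix xs ys assume xs: "xs \<in> Pi\<^sub>E {..<n} (\<lambda>_. UNIV)" and ys: "ys \<in> Pi\<^sub>E {..<n} (\<lambda>_. UNIV)"
    and eq: "labelled_sample b n xs = labelled_sample b n ys"
  from xs ys show "xs = ys"
  proof (rule PiE_ext)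
    fix i assume "i \<in> {..<n}"
    moreover have "labelled_sample b n xs i = labelled_sample b n ys i"
      using eq by simp
    ultimately show "xs i = ys i"
      by (simp add: labelled_sample_def)
  qed
qed

lemma product_prob_space_labelled_uniform: "product_prob_space (\<lambda>_. labelled_uniform b)"
  by (intro product_prob_spaceI prob_space_labelled_uniform)

lemma singleton_in_sets_labelled_uniform: "{z} \<in> sets (labelled_uniform b)"
  using pair_measureI[of "{fst z}" _ "{snd z}"] by simp

lemma singleton_labelled_sample:
  "{labelled_sample b n xs} = Pi\<^sub>E {..<n} (\<lambda>i. {labelled_sample b n xs i})"
  by (rule PiE_singleton[symmetric]) (simp add: labelled_sample_def)

lemma singleton_labelled_sample_in_sets_PiM:
  "{labelled_sample b n xs} \<in> sets (Pi\<^sub>M {..<n} (\<lambda>_. labelled_uniform b))"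
  unfolding singleton_labelled_sample
  by (intro sets_PiM_I_finite finite_lessThan singleton_in_sets_labelled_uniform)

lemma emeasure_PiM_labelled_sample:
  fixes b :: "'x::finite \<Rightarrow> real"
  shows "emeasure (Pi\<^sub>M {..<n} (\<lambda>_. labelled_uniform b)) {labelled_sample b n xs}
    = ennreal (1 / real CARD('x) ^ n)"
proof -
  interpret product_prob_space "\<lambda>_. labelled_uniform b" "{..<n}"
    by (rule product_prob_space_labelled_uniform)
  have "emeasure (Pi\<^sub>M {..<n} (\<lambda>_. labelled_uniform b)) {labelled_sample b n xs}
      = (\<Prod>i\<in>{..<n}. emeasure (labelled_uniform b) {labelled_sample b n xs i})"
    unfolding singleton_labelled_sample
    by (intro emeasure_PiM finite_lessThan singleton_in_sets_labelled_uniform)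
  also have "\<dots> = (\<Prod>i\<in>{..<n}. ennreal (1 / CARD('x)))"
    by (intro prod.cong refl) (simp add: labelled_sample_def emeasure_labelled_uniform_singleton)
  finally show ?thesis
    by (simp add: ennreal_power power_one_over)
qed

lemma AE_PiM_labelled_sample:
  fixes b :: "'x::finite \<Rightarrow> real"
  shows "AE \<omega> in Pi\<^sub>M {..<n} (\<lambda>_. labelled_uniform b).
    \<omega> \<in> labelled_sample b n ` Pi\<^sub>E {..<n} (\<lambda>_. UNIV)"
proof -
  interpret product_prob_space "\<lambda>_. labelled_uniform b" "{..<n}"
    by (rule product_prob_space_labelled_uniform)
  have "AE \<omega> in Pi\<^sub>M {..<n} (\<lambda>_. labelled_uniform b). \<forall>i\<in>{..<n}. snd (\<omega> i) = b (fst (\<omega> i))"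
    by (intro AE_finite_allI AE_component AE_labelled_uniform_graph) auto
  with AE_space show ?thesis
  proof eventually_elim
    case (elim \<omega>)
    have "\<omega> \<in> extensional {..<n}"
      using elim(1) by (simp add: space_PiM PiE_def)
    then have "\<omega> = labelled_sample b n (\<lambda>i\<in>{..<n}. fst (\<omega> i))"
    proof (rule extensionalityI)
      fix i assume "i \<in> {..<n}"
      with elim(2) have "snd (\<omega> i) = b (fst (\<omega> i))" by blast
      with \<open>i \<in> {..<n}\<close> show "\<omega> i = labelled_sample b n (\<lambda>i\<in>{..<n}. fst (\<omega> i)) i"
        by (simp add: labelled_sample_def prod_eq_iff)
    qed (simp add: labelled_sample_def)
    moreover have "(\<lambda>i\<in>{..<n}. fst (\<omega> i)) \<in> Pi\<^sub>E {..<n} (\<lambda>_. UNIV)"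
      by simp
    ultimately show ?case
      by (intro rev_image_eqI)
  qed
qed

lemma success_prob_labelled_uniform:
  fixes b :: "'x::finite \<Rightarrow> real"
  shows "success_prob n L (labelled_uniform b) B \<epsilon> = ennreal
     ((\<Sum>xs\<in>Pi\<^sub>E {..<n} (\<lambda>_. UNIV). measure_pmf.prob (L (labelled_sample b n xs)) {f. good_output (labelled_uniform b) B \<epsilon> f})
      / real CARD('x) ^ n)"
proof -
  let ?P = "Pi\<^sub>M {..<n} (\<lambda>_. labelled_uniform b)"
  let ?\<Omega> = "Pi\<^sub>E {..<n} (\<lambda>_. UNIV :: 'x set)"
  define G where "G \<omega> = measure_pmf.prob (L \<omega>) {f. good_output (labelled_uniform b) B \<epsilon> f}" for \<omega>
  \<comment> \<open>G need not be measurable, so the integral is evaluated on the finite support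
    instead of by a change of variables.\<close>
  have "success_prob n L (labelled_uniform b) B \<epsilon>
      = (\<Sum>\<omega>\<in>labelled_sample b n ` ?\<Omega>. ennreal (G \<omega>) * emeasure ?P {\<omega>})"
    unfolding success_prob_def G_def
    using AE_PiM_labelled_sample singleton_labelled_sample_in_sets_PiM
    by (intro nn_integral_finite_support finite_imageI finite_PiE) auto
  also have "\<dots> = (\<Sum>xs\<in>?\<Omega>. ennreal (G (labelled_sample b n xs) / real CARD('x) ^ n))"
    by (simp add: sum.reindex[OF inj_on_labelled_sample] emeasure_PiM_labelled_sample
        ennreal_mult''[symmetric])
  also have "\<dots> = ennreal ((\<Sum>xs\<in>?\<Omega>. G (labelled_sample b n xs)) / real CARD('x) ^ n)"
    by (simp add: sum_divide_distrib G_def sum_ennreal)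
  finally show ?thesis unfolding G_def .
qed

section \<open>Sample lower bound for deterministic correlation maximization\<close>

definition boolean_hyps :: "('x \<Rightarrow> real option) set" where
  "boolean_hyps = {s. \<forall>x. s x \<in> {Some 0, Some 1}}"

definition sign_funs :: "('x \<Rightarrow> real) set" where
  "sign_funs = {b. \<forall>x. b x \<in> {-1, 1}}"

lemma boolean_hypsD: "s \<in> boolean_hyps \<Longrightarrow> s x \<in> {Some 0, Some 1}"
  by (simp add: boolean_hyps_def)

lemma sign_funsD: "b \<in> sign_funs \<Longrightarrow> b x \<in> {-1, 1}"
  by (simp add: sign_funs_def)

lemma finite_sign_funs: "finite (sign_funs :: ('x::finite \<Rightarrow> real) set)"
proof -
  have "sign_funs = Pi\<^sub>E (UNIV :: 'x set) (\<lambda>_. {-1, 1 :: real})"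
    by (auto simp: sign_funs_def PiE_def Pi_def)
  moreover have "finite (Pi\<^sub>E (UNIV :: 'x set) (\<lambda>_. {-1, 1 :: real}))"
    by (intro finite_PiE) auto
  ultimately show ?thesis by simp
qed

lemma SUP_boolean_hyps_labelled_uniform:
  fixes b :: "'x::finite \<Rightarrow> real"
  assumes b: "b \<in> sign_funs"
  shows "(SUP s\<in>boolean_hyps. \<integral>z. gprod (snd z) (s (fst z)) \<partial>labelled_uniform b)
    = (\<Sum>x\<in>UNIV. of_bool (b x = 1)) / CARD('x)"
proof -
  have integral_eq: "(\<integral>z. gprod (snd z) (s (fst z)) \<partial>labelled_uniform b) = (\<Sum>x\<in>UNIV. b x * the (s x)) / CARD('x)"
    if "s \<in> boolean_hyps" for s
  proof -
    have "gprod (snd z) (s (fst z)) = snd z * the (s (fst z))" for z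
      using boolean_hypsD[OF that, of "fst z"] by (auto simp: gprod_def)
    then show ?thesis
      using integral_snd_mult_labelled_uniform[of b "\<lambda>x. the (s x)"] by simp
  qed
  show ?thesis
  proof (rule cSup_eq_maximum)
    let ?s = "\<lambda>x. Some (of_bool (b x = 1) :: real)"
    have "?s \<in> boolean_hyps" by (simp add: boolean_hyps_def)
    moreover have "(\<Sum>x\<in>UNIV. of_bool (b x = 1)) / CARD('x)
        = (\<integral>z. gprod (snd z) (?s (fst z)) \<partial>labelled_uniform b)"
      unfolding integral_eq[OF \<open>?s \<in> boolean_hyps\<close>] by simp
    ultimately show "(\<Sum>x\<in>UNIV. of_bool (b x = 1)) / CARD('x)
        \<in> (\<lambda>s. \<integral>z. gprod (snd z) (s (fst z)) \<partial>labelled_uniform b) ` boolean_hyps"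
      by (rule rev_image_eqI[of ?s])
  next
    fix y assume "y \<in> (\<lambda>s. \<integral>z. gprod (snd z) (s (fst z)) \<partial>labelled_uniform b) ` boolean_hyps"
    then obtain s where s: "s \<in> boolean_hyps" and y: "y = (\<Sum>x\<in>UNIV. b x * the (s x)) / CARD('x)"
      using integral_eq by blast
    have "b x * the (s x) \<le> of_bool (b x = 1)" for x
      using boolean_hypsD[OF s, of x] sign_funsD[OF b, of x] by auto
    then show "y \<le> (\<Sum>x\<in>UNIV. of_bool (b x = 1)) / CARD('x)"
      unfolding y by (intro divide_right_mono sum_mono) auto
  qed
qed

lemma good_output_labelled_uniform_iff:
  fixes b f :: "'x::finite \<Rightarrow> real"
  assumes "b \<in> sign_funs"
  shows "good_output (labelled_uniform b) boolean_hyps \<epsilon> f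
    \<longleftrightarrow> (\<Sum>x\<in>UNIV. of_bool (b x = 1) - b x * f x) \<le> \<epsilon> * CARD('x)"
proof -
  have "C / N - \<epsilon> \<le> A / N \<longleftrightarrow> C - A \<le> \<epsilon> * N" if "N > 0" for A C N :: real
  proof -
    have "C / N - \<epsilon> \<le> A / N \<longleftrightarrow> (C - A) / N \<le> \<epsilon>"
      by (auto simp: diff_divide_distrib)
    also have "\<dots> \<longleftrightarrow> C - A \<le> \<epsilon> * N"
      using that by (simp add: pos_divide_le_eq)
    finally show ?thesis .
  qed
  then show ?thesis
    unfolding good_output_def SUP_boolean_hyps_labelled_uniform[OF assms]
      integral_snd_mult_labelled_uniform sum_subtractf
    by simp
qed

definition flip_outside :: "'x set \<Rightarrow> ('x \<Rightarrow> real) \<Rightarrow> 'x \<Rightarrow> real" where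
  "flip_outside R b x = (if x \<in> R then b x else - b x)"

lemma flip_outside_in_sign_funs: "b \<in> sign_funs \<Longrightarrow> flip_outside R b \<in> sign_funs"
  by (auto simp: sign_funs_def flip_outside_def)

lemma flip_outside_flip_outside [simp]: "flip_outside R (flip_outside R b) = b"
  by (simp add: flip_outside_def fun_eq_iff)

lemma card_bound_if_good_output_flip_outside:
  fixes b f :: "'x::finite \<Rightarrow> real" and \<epsilon> :: real
  assumes b: "b \<in> sign_funs" and f: "f \<in> sign_funs"
    and good: "good_output (labelled_uniform b) boolean_hyps \<epsilon> f"
    and good_flip: "good_output (labelled_uniform (flip_outside R b)) boolean_hyps \<epsilon> f"
  shows "CARD('x) * (1 - 2 * \<epsilon>) \<le> 3 * real (card R)"
proof -
  define loss where "loss c x = of_bool (c x = 1) - c x * f x" for c :: "'x \<Rightarrow> real" and x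
  \<comment> \<open>Off R the two labels differ, so the correlation terms cancel and exactly one
    indicator is 1.\<close>
  have "(if x \<in> R then -2 else 1) \<le> loss b x + loss (flip_outside R b) x" for x
    using sign_funsD[OF b, of x] sign_funsD[OF f, of x] by (auto simp: loss_def flip_outside_def)
  then have "(\<Sum>x\<in>UNIV. if x \<in> R then -2 else 1) \<le> (\<Sum>x\<in>UNIV. loss b x) + (\<Sum>x\<in>UNIV. loss (flip_outside R b) x)"
    unfolding sum.distrib[symmetric] by (rule sum_mono)
  also have "\<dots> \<le> 2 * \<epsilon> * CARD('x)"
    using good good_flip b flip_outside_in_sign_funs[OF b]
    unfolding loss_def by (simp add: good_output_labelled_uniform_iff)
  finally show ?thesis
    by (simp add: sum.If_cases Compl_eq_Diff_UNIV card_Diff_subset of_nat_diff card_mono algebra_simps)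
qed

lemma sum_le_half_card_if_involution:
  fixes h :: "'a \<Rightarrow> real"
  assumes "finite F" and "\<And>b. b \<in> F \<Longrightarrow> g b \<in> F" and "\<And>b. b \<in> F \<Longrightarrow> g (g b) = b"
    and "\<And>b. b \<in> F \<Longrightarrow> h b + h (g b) \<le> 1"
  shows "(\<Sum>b\<in>F. h b) \<le> card F / 2"
proof -
  have "(\<Sum>b\<in>F. h b) = (\<Sum>b\<in>F. h (g b))"
    using assms(2,3) by (intro sum.reindex_bij_witness[of _ g g]) auto
  then have "2 * (\<Sum>b\<in>F. h b) = (\<Sum>b\<in>F. h b + h (g b))"
    by (simp add: sum.distrib)
  also have "\<dots> \<le> card F"
    using sum_mono[of F "\<lambda>b. h b + h (g b)" "\<lambda>_. 1"] assms(4) by simp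
  finally show ?thesis by simp
qed

lemma prob_add_le_one_if_disjoint_on_support:
  assumes "A \<inter> B \<inter> set_pmf p = {}"
  shows "measure_pmf.prob p A + measure_pmf.prob p B \<le> 1"
proof -
  have "measure_pmf.prob p A + measure_pmf.prob p B
      = measure_pmf.prob p (A \<inter> set_pmf p) + measure_pmf.prob p (B \<inter> set_pmf p)"
    by (simp add: measure_Int_set_pmf)
  also have "\<dots> = measure_pmf.prob p ((A \<inter> set_pmf p) \<union> (B \<inter> set_pmf p))"
    using assms by (intro measure_pmf.finite_measure_Union[symmetric]) auto
  also have "\<dots> \<le> 1"
    by simp
  finally show ?thesis .
qed

lemma sum_prob_good_output_le_half_card:
  fixes xs :: "nat \<Rightarrow> 'x::finite" and \<epsilon> :: real
  assumes L: "\<And>\<omega>. pm_valued (L \<omega>)" and n: "3 * real n < CARD('x) * (1 - 2 * \<epsilon>)"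
  shows "(\<Sum>b\<in>sign_funs. measure_pmf.prob (L (labelled_sample b n xs))
      {f. good_output (labelled_uniform b) boolean_hyps \<epsilon> f}) \<le> card (sign_funs :: ('x \<Rightarrow> real) set) / 2"
proof (rule sum_le_half_card_if_involution[OF finite_sign_funs])
  define R where "R = xs ` {..<n}"
  show "flip_outside R b \<in> sign_funs" if "b \<in> sign_funs" for b
    using that by (rule flip_outside_in_sign_funs)
  show "flip_outside R (flip_outside R b) = b" for b
    by simp
  fix b :: "'x \<Rightarrow> real" assume b: "b \<in> sign_funs"
  have same_sample: "labelled_sample (flip_outside R b) n xs = labelled_sample b n xs"
    by (auto simp: labelled_sample_def flip_outside_def R_def)
  have "card R \<le> n"
    unfolding R_def using card_image_le[of "{..<n}" xs] by simp
  then have small_R: "\<not> CARD('x) * (1 - 2 * \<epsilon>) \<le> 3 * real (card R)"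
    using n by linarith
  have "\<not> (good_output (labelled_uniform b) boolean_hyps \<epsilon> f
      \<and> good_output (labelled_uniform (flip_outside R b)) boolean_hyps \<epsilon> f)"
    if "f \<in> set_pmf (L (labelled_sample b n xs))" for f
  proof
    have "f \<in> sign_funs"
      using L that unfolding pm_valued_def sign_funs_def by blast
    moreover assume "good_output (labelled_uniform b) boolean_hyps \<epsilon> f
      \<and> good_output (labelled_uniform (flip_outside R b)) boolean_hyps \<epsilon> f"
    ultimately show False
      using card_bound_if_good_output_flip_outside[OF b] small_R by blast
  qed
  then have "{f. good_output (labelled_uniform b) boolean_hyps \<epsilon> f}
      \<inter> {f. good_output (labelled_uniform (flip_outside R b)) boolean_hyps \<epsilon> f}
      \<inter> set_pmf (L (labelled_sample b n xs)) = {}"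
    by blast
  then show "measure_pmf.prob (L (labelled_sample b n xs)) {f. good_output (labelled_uniform b) boolean_hyps \<epsilon> f}
      + measure_pmf.prob (L (labelled_sample (flip_outside R b) n xs))
          {f. good_output (labelled_uniform (flip_outside R b)) boolean_hyps \<epsilon> f} \<le> 1"
    unfolding same_sample by (rule prob_add_le_one_if_disjoint_on_support)
qed

lemma DCorM_obtains_learner_labelled_uniform:
  fixes B :: "('x::finite \<Rightarrow> real option) set" and \<epsilon> \<delta> :: real
  assumes DCorM: "DCorM (measure_pmf (pmf_of_set UNIV)) n B boolean_hyps \<epsilon> \<delta>"
    and B: "\<And>b. b \<in> sign_funs \<Longrightarrow> (\<lambda>x. Some (b x)) \<in> B"
  obtains L where "\<And>\<omega>. pm_valued (L \<omega>)"
    and "\<And>b :: 'x \<Rightarrow> real. b \<in> sign_funs \<Longrightarrow> 1 - \<delta> \<le> (\<Sum>xs\<in>Pi\<^sub>E {..<n} (\<lambda>_. UNIV).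
          measure_pmf.prob (L (labelled_sample b n xs)) {f. good_output (labelled_uniform b) boolean_hyps \<epsilon> f})
        / real CARD('x) ^ n"
proof -
  obtain L where L: "\<And>\<omega>. pm_valued (L \<omega>)"
    and success: "\<And>\<mu>. valid_dist \<mu> \<and> distr \<mu> (count_space UNIV) fst = measure_pmf (pmf_of_set UNIV)
        \<and> (\<exists>s\<in>B. det_realizes s \<mu>) \<Longrightarrow> success_prob n L \<mu> boolean_hyps \<epsilon> \<ge> ennreal (1 - \<delta>)"
    using DCorM unfolding DCorM_def by blast
  have bound: "1 - \<delta> \<le> (\<Sum>xs\<in>Pi\<^sub>E {..<n} (\<lambda>_. UNIV).
          measure_pmf.prob (L (labelled_sample b n xs)) {f. good_output (labelled_uniform b) boolean_hyps \<epsilon> f})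
        / real CARD('x) ^ n" if b: "b \<in> sign_funs" for b
  proof -
    have "b x \<in> {-1..1}" for x
      using sign_funsD[OF b, of x] by auto
    then have "valid_dist (labelled_uniform b)"
      by (rule valid_dist_labelled_uniform)
    then have "ennreal (1 - \<delta>) \<le> success_prob n L (labelled_uniform b) boolean_hyps \<epsilon>"
      using B[OF b] distr_fst_labelled_uniform det_realizes_labelled_uniform
      by (intro success) blast
    then show ?thesis
      unfolding success_prob_labelled_uniform by (simp add: ennreal_le_iff sum_nonneg)
  qed
  show ?thesis
    using L bound by (rule that)
qed

lemma DCorM_uniform_sample_bound:
  fixes B :: "('x::finite \<Rightarrow> real option) set" and \<epsilon> \<delta> :: real
  assumes DCorM: "DCorM (measure_pmf (pmf_of_set UNIV)) n B boolean_hyps \<epsilon> \<delta>"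
    and B: "\<And>b. b \<in> sign_funs \<Longrightarrow> (\<lambda>x. Some (b x)) \<in> B" and "\<delta> < 1/2"
  shows "CARD('x) * (1 - 2 * \<epsilon>) \<le> 3 * real n"
proof (rule ccontr)
  assume "\<not> ?thesis"
  then have n: "3 * real n < CARD('x) * (1 - 2 * \<epsilon>)" by simp
  define F where "F = (sign_funs :: ('x \<Rightarrow> real) set)"
  define \<Omega> where "\<Omega> = Pi\<^sub>E {..<n} (\<lambda>_. UNIV :: 'x set)"
  obtain L where L: "\<And>\<omega>. pm_valued (L \<omega>)"
    and success: "\<And>b. b \<in> F \<Longrightarrow> 1 - \<delta> \<le> (\<Sum>xs\<in>\<Omega>. measure_pmf.prob (L (labelled_sample b n xs))
        {f. good_output (labelled_uniform b) boolean_hyps \<epsilon> f}) / real CARD('x) ^ n"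
    using DCorM_obtains_learner_labelled_uniform[OF DCorM B] unfolding F_def \<Omega>_def by blast
  define P where "P b xs = measure_pmf.prob (L (labelled_sample b n xs))
      {f. good_output (labelled_uniform b) boolean_hyps \<epsilon> f}" for b xs
  have "card F * (1 - \<delta>) = (\<Sum>b\<in>F. 1 - \<delta>)"
    by simp
  also have "\<dots> \<le> (\<Sum>b\<in>F. (\<Sum>xs\<in>\<Omega>. P b xs) / real CARD('x) ^ n)"
    using success unfolding P_def by (rule sum_mono)
  also have "\<dots> = (\<Sum>xs\<in>\<Omega>. \<Sum>b\<in>F. P b xs) / real CARD('x) ^ n"
    by (subst sum.swap) (simp add: sum_divide_distrib)
  also have "\<dots> \<le> (\<Sum>xs\<in>\<Omega>. card F / 2) / real CARD('x) ^ n"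
    unfolding P_def F_def using sum_prob_good_output_le_half_card[OF L n]
    by (intro divide_right_mono sum_mono) auto
  also have "\<dots> = card F / 2"
    by (simp add: \<Omega>_def card_PiE)
  finally have "card F * (1 - \<delta>) \<le> card F * (1 / 2)"
    by simp
  moreover have "card F > 0"
    using finite_sign_funs by (auto simp: F_def card_gt_0_iff sign_funs_def)
  ultimately show False
    using \<open>\<delta> < 1/2\<close> mult_strict_left_mono[of "1 / 2" "1 - \<delta>" "real (card F)"] by simp
qed

theorem lemmaC2:
  fixes m :: nat
  assumes "m > 0" and "CARD('x::finite) = 2 * m"
  defines "S \<equiv> {s :: 'x \<Rightarrow> real option. \<forall>x. s x \<in> {Some 0, Some 1}}"
      and "B \<equiv> {b :: 'x \<Rightarrow> real option. \<forall>x. b x \<in> {Some (-1), Some 1}}"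
  shows "(\<forall>\<epsilon> \<delta>. \<epsilon> \<ge> 0 \<and> \<delta> \<ge> 0 \<longrightarrow> numCorM S B \<epsilon> \<delta> = 0)
       \<and> (\<forall>\<epsilon> \<delta> n. \<epsilon> \<in> {0<..<1/2} \<and> \<delta> \<in> {0<..<1/2} \<and>
            DCorM (measure_pmf (pmf_of_set (UNIV :: 'x set))) n B S \<epsilon> \<delta>
            \<longrightarrow> real n \<ge> (1/2 - \<epsilon>) * real m)"
proof (intro conjI allI impI)
  fix \<epsilon> \<delta> :: real assume "\<epsilon> \<ge> 0 \<and> \<delta> \<ge> 0"
  have S_nonneg: "\<exists>v \<ge> 0. s x = Some v" if "s \<in> S" for s x
  proof -
    have "s x \<in> {Some 0, Some 1}" using that by (simp add: S_def)
    then show ?thesis by auto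
  qed
  have B_le_one: "\<exists>v \<le> 1. b x = Some v" if "b \<in> B" for b x
  proof -
    have "b x \<in> {Some (-1), Some 1}" using that by (simp add: B_def)
    then show ?thesis by auto
  qed
  have "(\<lambda>_. Some 1) \<in> B" by (simp add: B_def)
  then have "CorM 0 S B \<epsilon> \<delta>"
    using S_nonneg B_le_one \<open>\<epsilon> \<ge> 0 \<and> \<delta> \<ge> 0\<close> by (intro CorM_0_if_nonneg_and_le_one) auto
  then show "numCorM S B \<epsilon> \<delta> = 0"
    unfolding numCorM_def by (rule Least_eq_0)
next
  fix \<epsilon> \<delta> :: real and n :: nat
  assume "\<epsilon> \<in> {0<..<1/2} \<and> \<delta> \<in> {0<..<1/2} \<and> DCorM (measure_pmf (pmf_of_set UNIV)) n B S \<epsilon> \<delta>"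
  moreover have "S = boolean_hyps"
    by (simp add: S_def boolean_hyps_def)
  moreover have "(\<lambda>x. Some (b x)) \<in> B" if "b \<in> sign_funs" for b
    using that by (auto simp: B_def sign_funs_def)
  ultimately have "CARD('x) * (1 - 2 * \<epsilon>) \<le> 3 * real n" and "\<epsilon> < 1/2"
    using DCorM_uniform_sample_bound[of n B \<epsilon> \<delta>] by auto
  then show "real n \<ge> (1/2 - \<epsilon>) * real m"
    using assms(2) by (simp add: algebra_simps)
qed

end
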